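(* Let $p>0$ and let $u:\mathbb{R}^4\to\mathbb{R}$ be a solution to $\Delta^2 u=(1-|x|^p)e^{4u}$ in $\mathbb{R}^4$ with $(1-|x|^p)e^{4u}\in L^1(\mathbb{R}^4)$, $\Lambda:=\int_{\mathbb{R}^4}(1-|x|^p)e^{4u}dx$, and $$v(x):=\frac{1}{8\pi^2}\int_{\mathbb{R}^4}\log\left(\frac{|y|}{|x-y|}\right)(1-|y|^p)e^{4u(y)}\,dy.$$ Then there exists a constant $C$ such that for all $|x|\ge 4$, $$v(x)\le -\frac{\Lambda}{8\pi^2}\log|x|+C.$$ *)

theory Defs
  imports "HOL-Analysis.Analysis"
begin

definition pdiff :: "real^4 \<Rightarrow> (real^4 \<Rightarrow> real) \<Rightarrow> real^4 \<Rightarrow> real" where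
  "pdiff b f x = deriv (\<lambda>t. f (x + t *\<^sub>R b)) 0"

definition laplacian :: "(real^4 \<Rightarrow> real) \<Rightarrow> real^4 \<Rightarrow> real" where
  "laplacian f x = (\<Sum>b\<in>Basis. pdiff b (pdiff b f) x)"

definition bilaplacian :: "(real^4 \<Rightarrow> real) \<Rightarrow> real^4 \<Rightarrow> real" where
  "bilaplacian f = laplacian (laplacian f)"

fun Ck :: "nat \<Rightarrow> (real^4 \<Rightarrow> real) \<Rightarrow> bool" where
  "Ck 0 f = continuous_on UNIV f"
| "Ck (Suc k) f = (f differentiable_on UNIV \<and> (\<forall>b\<in>Basis. Ck k (pdiff b f)))"

end

theory Submission
  imports Defs
begin

text \<open>Write f = (1 - |y|^p) e^(4u). For |x| \<ge> 2 the shifted kernel ln (|y| / |x - y|) + ln |x| is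
  at most ln 2 on the unit ball, where f \<ge> 0, and at least -ln 2 outside it, where f \<le> 0. Hence
  (ln (|y| / |x - y|) + ln |x|) f(y) \<le> ln 2 |f(y)| pointwise, and integrating gives the claim with
  C = ln 2 / (8 \<pi>^2) times the L1 norm of f. The real work is
  showing that the kernel integral exists (a Lebesgue integral of a non-integrable function is 0
  in Isabelle): the logarithmic singularity is dominated by a product of integrable one-variable
  functions.\<close>

lemma neg_ln_le_powr:
  fixes s :: real assumes "0 < s" shows "- ln s \<le> 2 * s powr (-1/2)"
proof -
  have "ln (s powr (-1/2)) \<le> s powr (-1/2) - 1"
    by (rule ln_le_minus_one) (use assms in simp)
  moreover have "ln (s powr (-1/2)) = (-1/2) * ln s" using assms by (simp add: ln_powr)
  ultimately show ?thesis by simp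
qed

lemma ln_abs_nonpos: "\<bar>t\<bar> \<le> 1 \<Longrightarrow> ln \<bar>t::real\<bar> \<le> 0"
  by (cases "t = 0") auto

lemma abs_ln_div_le: "\<bar>ln (a / b)\<bar> \<le> \<bar>ln a\<bar> + \<bar>ln (b::real)\<bar>" if "0 \<le> a" "0 \<le> b"
  using that by (cases "a = 0 \<or> b = 0") (auto simp: ln_div)

definition ln_majorant1 :: "real \<Rightarrow> real" where
  "ln_majorant1 t = indicator {-1..1} t * (1 - ln \<bar>t\<bar>)"

lemma ln_majorant1_eq: "\<bar>t\<bar> \<le> 1 \<Longrightarrow> ln_majorant1 t = 1 - ln \<bar>t\<bar>"
  by (simp add: ln_majorant1_def abs_le_iff)

lemma ln_majorant1_nonneg: "0 \<le> ln_majorant1 t"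
  using ln_abs_nonpos[of t]
  by (cases "\<bar>t\<bar> \<le> 1") (auto simp: ln_majorant1_eq ln_majorant1_def indicator_def abs_le_iff)

lemma one_le_ln_majorant1: "\<bar>t\<bar> \<le> 1 \<Longrightarrow> 1 \<le> ln_majorant1 t"
  using ln_abs_nonpos[of t] by (simp add: ln_majorant1_eq)

lemma integrable_ln_majorant1: "integrable lborel ln_majorant1"
proof -
  define g where "g t = indicator {-1..1} t + 2 * (indicator {0..1} t * t powr (-1/2)
    + indicator {0..1} (-t) * (-t) powr (-1/2))" for t :: real
  have sqrt_int: "integrable lborel (\<lambda>t::real. indicator {0..1} t * t powr (-1/2))"
  proof -
    have "(\<lambda>t::real. t powr (-1/2)) integrable_on {0..1}"
      by (rule integrable_on_powr_from_0) auto
    then have "(\<lambda>t::real. t powr (-1/2)) absolutely_integrable_on {0..1}"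
      by (subst absolutely_integrable_on_iff_nonneg) auto
    then show ?thesis unfolding set_integrable_def
      by (subst (asm) integrable_completion) (auto simp: mult_ac)
  qed
  have "integrable lborel g"
    unfolding g_def
    using sqrt_int lborel_integrable_real_affine[OF sqrt_int, of "-1" 0]
    by (intro Bochner_Integration.integrable_add Bochner_Integration.integrable_mult_right
        integrable_real_indicator) auto
  then show ?thesis
  proof (rule Bochner_Integration.integrable_bound[OF _ _ AE_I2])
    show "ln_majorant1 \<in> borel_measurable lborel" unfolding ln_majorant1_def by measurable
  next
    fix t :: real
    show "norm (ln_majorant1 t) \<le> norm (g t)"
    proof (cases "\<bar>t\<bar> \<le> 1")
      case True
      have "1 - ln \<bar>t\<bar> \<le> 1 + 2 * \<bar>t\<bar> powr (-1/2)"
        using neg_ln_le_powr[of "\<bar>t\<bar>"] by (cases "t = 0") auto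
      moreover have "g t = 1 + 2 * \<bar>t\<bar> powr (-1/2)"
        using True by (cases "t \<ge> 0") (auto simp: g_def indicator_def)
      ultimately show ?thesis
        using True ln_majorant1_nonneg[of t] by (simp add: ln_majorant1_eq)
    qed (auto simp: ln_majorant1_def g_def indicator_def)
  qed
qed

lemma integrable_prod_coordinates:
  fixes \<phi> :: "'a::euclidean_space \<Rightarrow> real \<Rightarrow> real"
  assumes int: "\<And>b. b \<in> Basis \<Longrightarrow> integrable lborel (\<phi> b)"
  shows "integrable lborel (\<lambda>y::'a. \<Prod>b\<in>Basis. \<phi> b (y \<bullet> b))"
proof -
  interpret product_sigma_finite "\<lambda>_. lborel" by standard
  have meas: "\<phi> b \<in> borel_measurable borel" if "b \<in> Basis" for b
    using borel_measurable_integrable[OF int[OF that]] by simp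
  have coord: "(\<Sum>c\<in>Basis. f c *\<^sub>R c) \<bullet> b = f b" if "b \<in> Basis" for f :: "'a \<Rightarrow> real" and b
    using that by (simp add: inner_sum_left inner_Basis if_distrib sum.delta cong: if_cong)
  have "integrable (\<Pi>\<^sub>M b\<in>Basis. lborel) (\<lambda>f. \<Prod>b\<in>Basis. \<phi> b (f b))"
    by (rule product_integrable_prod) (auto simp: int)
  with coord have "integrable (\<Pi>\<^sub>M b\<in>Basis. lborel)
      (\<lambda>f. (\<lambda>y::'a. \<Prod>b\<in>Basis. \<phi> b (y \<bullet> b)) (\<Sum>c\<in>Basis. f c *\<^sub>R c))"
    by (simp cong: prod.cong)
  moreover have "(\<lambda>y::'a. \<Prod>b\<in>Basis. \<phi> b (y \<bullet> b)) \<in> borel_measurable borel"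
    using meas by (intro borel_measurable_prod) (auto intro: measurable_compose[OF _ meas])
  ultimately show ?thesis
    by (subst lborel_eq) (subst integrable_distr_eq; auto)
qed

text \<open>Near a point z with a nonzero coordinate z \<bullet> b we have -ln |z| \<le> -ln |z \<bullet> b|, so a product
  of integrable one-variable majorants dominates the logarithmic singularity in every dimension.\<close>
definition ln_majorant :: "'a::euclidean_space \<Rightarrow> real" where
  "ln_majorant z = (\<Prod>b\<in>Basis. ln_majorant1 (z \<bullet> b))"

lemma ln_majorant_nonneg: "0 \<le> ln_majorant z"
  unfolding ln_majorant_def by (intro prod_nonneg) (auto simp: ln_majorant1_nonneg)

lemma integrable_ln_majorant_shift: "integrable lborel (\<lambda>y::'a::euclidean_space. ln_majorant (y - a))"
proof -
  have "integrable lborel (\<lambda>t. ln_majorant1 (t - c))" for c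
    using lborel_integrable_real_affine[OF integrable_ln_majorant1, of 1 "-c"] by simp
  then have "integrable lborel (\<lambda>y::'a. \<Prod>b\<in>Basis. (\<lambda>t. ln_majorant1 (t - a \<bullet> b)) (y \<bullet> b))"
    by (intro integrable_prod_coordinates)
  then show ?thesis by (simp add: ln_majorant_def inner_diff_left)
qed

lemma neg_ln_norm_le_ln_majorant:
  fixes z :: "'a::euclidean_space"
  assumes "norm z \<le> 1"
  shows "- ln (norm z) \<le> ln_majorant z"
proof (cases "z = 0")
  case True
  then show ?thesis using ln_majorant_nonneg[of z] by simp
next
  case False
  then obtain b where b: "b \<in> Basis" "z \<bullet> b \<noteq> 0" using euclidean_all_zero_iff by blast
  have coord_le1: "\<bar>z \<bullet> c\<bar> \<le> 1" if "c \<in> Basis" for c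
    using Basis_le_norm[OF that, of z] assms by simp
  have "- ln (norm z) \<le> - ln \<bar>z \<bullet> b\<bar>"
    using b Basis_le_norm[OF b(1), of z] by (simp add: ln_mono)
  also have "\<dots> \<le> ln_majorant1 (z \<bullet> b)" using coord_le1[OF b(1)] by (simp add: ln_majorant1_eq)
  also have "\<dots> \<le> ln_majorant1 (z \<bullet> b) * (\<Prod>c\<in>Basis - {b}. ln_majorant1 (z \<bullet> c))"
  proof -
    have "1 \<le> (\<Prod>c\<in>Basis - {b}. ln_majorant1 (z \<bullet> c))"
      by (intro prod_ge_1) (simp add: coord_le1 one_le_ln_majorant1)
    from mult_left_mono[OF this ln_majorant1_nonneg] show ?thesis by simp
  qed
  also have "\<dots> = ln_majorant z"
    using b(1) by (simp add: ln_majorant_def prod.remove)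
  finally show ?thesis .
qed

lemma abs_ln_norm_le: "\<bar>ln (norm z)\<bar> \<le> norm z + ln_majorant (z::'a::euclidean_space)"
proof (cases "norm z \<le> 1")
  case True
  then have "\<bar>ln (norm z)\<bar> = - ln (norm z)"
    using ln_abs_nonpos[of "norm z"] by simp
  then show ?thesis
    using neg_ln_norm_le_ln_majorant[OF True] norm_ge_zero[of z] by linarith
next
  case False
  then have "ln (norm z) \<le> norm z - 1"
    by (intro ln_le_minus_one) auto
  then show ?thesis
    using False ln_majorant_nonneg[of z] by simp
qed

lemma abs_ln_norm_ratio_le_ln2:
  fixes x y :: "'a::real_normed_vector"
  assumes far: "2 * norm x < norm y"
  shows "\<bar>ln (norm y / norm (x - y))\<bar> \<le> ln 2"
proof -
  have lower: "norm y - norm x \<le> norm (x - y)"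
    using norm_triangle_ineq2[of y x] by (simp add: norm_minus_commute)
  have upper: "norm (x - y) \<le> norm x + norm y" by (rule norm_triangle_ineq4)
  have pos: "0 < norm (x - y)" "0 < norm y"
    using lower far norm_ge_zero[of x] by linarith+
  have "ln (norm y) \<le> ln (2 * norm (x - y))" "ln (norm (x - y)) \<le> ln (2 * norm y)"
    using lower upper far pos by simp_all
  then show ?thesis using pos by (simp add: ln_div ln_mult)
qed

lemma integrable_ln_kernel:
  fixes f :: "'a::euclidean_space \<Rightarrow> real"
  assumes int: "integrable lborel f" and cont: "continuous_on UNIV f"
  shows "integrable lborel (\<lambda>y. ln (norm y / norm (x - y)) * f y)"
proof -
  define R where "R = 2 * norm x + 1"
  have "bounded (f ` cball 0 R)"
    by (intro compact_imp_bounded compact_continuous_image continuous_on_subset[OF cont]) auto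
  then obtain M where M: "\<And>y. norm y \<le> R \<Longrightarrow> \<bar>f y\<bar> \<le> M"
    unfolding bounded_iff by (metis image_eqI mem_cball_0 real_norm_def)
  have M_nonneg: "0 \<le> M"
    using M[of 0] R_def by (smt (verit) norm_ge_zero norm_zero)
  define g where "g y = ln 2 * \<bar>f y\<bar>
    + M * (indicator (cball 0 R) y * (3 * R) + ln_majorant y + ln_majorant (y - x))" for y
  have "integrable lborel (indicator (cball (0::'a) R) :: 'a \<Rightarrow> real)"
    using emeasure_lborel_cball_finite by (intro integrable_real_indicator) auto
  then have "integrable lborel g"
    unfolding g_def using int integrable_ln_majorant_shift[of 0] integrable_ln_majorant_shift[of x]
    by (intro Bochner_Integration.integrable_add Bochner_Integration.integrable_mult_right
        Bochner_Integration.integrable_mult_left integrable_abs) auto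
  then show ?thesis
  proof (rule Bochner_Integration.integrable_bound[OF _ _ AE_I2])
    show "(\<lambda>y. ln (norm y / norm (x - y)) * f y) \<in> borel_measurable lborel"
      using borel_measurable_integrable[OF int] by measurable
  next
    fix y :: 'a
    have majorants: "0 \<le> ln_majorant y" "0 \<le> ln_majorant (y - x)"
      by (rule ln_majorant_nonneg)+
    have "\<bar>ln (norm y / norm (x - y)) * f y\<bar> \<le> g y"
    proof (cases "norm y \<le> R")
      case True
      have "\<bar>ln (norm y / norm (x - y))\<bar> \<le> \<bar>ln (norm y)\<bar> + \<bar>ln (norm (y - x))\<bar>"
        using abs_ln_div_le[of "norm y" "norm (x - y)"] by (simp add: norm_minus_commute)
      also have "\<dots> \<le> (norm y + ln_majorant y) + (norm (y - x) + ln_majorant (y - x))"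
        by (intro add_mono abs_ln_norm_le)
      also have "\<dots> \<le> 3 * R + ln_majorant y + ln_majorant (y - x)"
        using True norm_triangle_ineq4[of y x] norm_ge_zero[of x] R_def by linarith
      finally have "\<bar>ln (norm y / norm (x - y)) * f y\<bar> \<le> (3 * R + ln_majorant y + ln_majorant (y - x)) * M"
        unfolding abs_mult using M[OF True] by (intro mult_mono) auto
      moreover have "g y = (3 * R + ln_majorant y + ln_majorant (y - x)) * M + ln 2 * \<bar>f y\<bar>"
        using True by (simp add: g_def algebra_simps)
      moreover have "0 \<le> ln 2 * \<bar>f y\<bar>" by simp
      ultimately show ?thesis by linarith
    next
      case False
      then have "\<bar>ln (norm y / norm (x - y))\<bar> \<le> ln 2"
        by (intro abs_ln_norm_ratio_le_ln2) (simp add: R_def)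
      then have "\<bar>ln (norm y / norm (x - y)) * f y\<bar> \<le> ln 2 * \<bar>f y\<bar>"
        unfolding abs_mult by (intro mult_right_mono) auto
      moreover have "0 \<le> M * (ln_majorant y + ln_majorant (y - x))"
        using M_nonneg majorants by simp
      ultimately show ?thesis
        using False by (simp add: g_def)
    qed
    then show "norm (ln (norm y / norm (x - y)) * f y) \<le> norm (g y)" by simp
  qed
qed

lemma ln_kernel_le_ln2_near_origin:
  fixes x y :: "'a::real_normed_vector"
  assumes x: "2 \<le> norm x" and y: "y \<noteq> 0" "norm y \<le> 1"
  shows "ln (norm y / norm (x - y)) + ln (norm x) \<le> ln 2"
proof -
  have dist: "norm x - 1 \<le> norm (x - y)"
    using norm_triangle_ineq2[of x y] y by simp
  have "norm y * norm x \<le> 2 * norm (x - y)"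
    using mult_right_mono[OF y(2) norm_ge_zero[of x]] dist x by simp
  moreover have "0 < norm (x - y)" "0 < norm x"
    using dist x by linarith+
  ultimately have "ln (norm y * norm x) \<le> ln (2 * norm (x - y))"
    using y by simp
  then show ?thesis
    using y \<open>0 < norm x\<close> \<open>0 < norm (x - y)\<close> by (simp add: ln_div ln_mult)
qed

lemma ln_kernel_ge_neg_ln2_off_unit_ball:
  fixes x y :: "'a::real_normed_vector"
  assumes x: "1 \<le> norm x" and y: "1 \<le> norm y"
  shows "- ln 2 \<le> ln (norm y / norm (x - y)) + ln (norm x)"
proof (cases "y = x")
  case True
  have "ln (norm y / norm (x - y)) = 0" "0 \<le> ln (norm x)" "0 \<le> ln (2::real)"
    using True x by simp_all
  then show ?thesis by linarith
next
  case False
  have "norm (x - y) \<le> norm x + norm y" by (rule norm_triangle_ineq4)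
  also have "\<dots> \<le> 2 * (norm y * norm x)"
    using mult_left_mono[OF y norm_ge_zero[of x]] mult_right_mono[OF x norm_ge_zero[of y]]
    by (simp add: mult.commute)
  finally have "ln (norm (x - y)) \<le> ln (2 * (norm y * norm x))"
    using False by (intro ln_mono) auto
  moreover have "x \<noteq> 0" "y \<noteq> 0" using x y by auto
  ultimately show ?thesis
    using False by (simp add: ln_div ln_mult)
qed

lemma ln_kernel_integral_le:
  fixes f :: "'a::euclidean_space \<Rightarrow> real"
  assumes int: "integrable lborel f" and cont: "continuous_on UNIV f"
    and nonneg_inside: "\<And>y. norm y < 1 \<Longrightarrow> 0 \<le> f y"
    and nonpos_outside: "\<And>y. 1 \<le> norm y \<Longrightarrow> f y \<le> 0"
    and x: "2 \<le> norm x"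
  shows "(LINT y|lborel. ln (norm y / norm (x - y)) * f y) + ln (norm x) * (LINT y|lborel. f y)
    \<le> ln 2 * (LINT y|lborel. \<bar>f y\<bar>)"
proof -
  have kernel_int: "integrable lborel (\<lambda>y. ln (norm y / norm (x - y)) * f y)"
    using int cont by (rule integrable_ln_kernel)
  have pointwise: "(ln (norm y / norm (x - y)) + ln (norm x)) * f y \<le> ln 2 * \<bar>f y\<bar>"
    if "y \<noteq> 0" for y
  proof (cases "norm y < 1")
    case True
    then show ?thesis
      using mult_right_mono[OF ln_kernel_le_ln2_near_origin[OF x that] nonneg_inside[OF True]]
        nonneg_inside[OF True] by simp
  next
    case False
    then show ?thesis
      using mult_right_mono_neg[OF ln_kernel_ge_neg_ln2_off_unit_ball[of x y] nonpos_outside[of y]] x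
        nonpos_outside[of y] by simp
  qed
  have "(LINT y|lborel. ln (norm y / norm (x - y)) * f y) + ln (norm x) * (LINT y|lborel. f y)
      = (LINT y|lborel. (ln (norm y / norm (x - y)) + ln (norm x)) * f y)"
    using kernel_int int by (simp add: distrib_right)
  also have "\<dots> \<le> (LINT y|lborel. ln 2 * \<bar>f y\<bar>)"
    using AE_lborel_singleton[of 0] kernel_int int pointwise
    by (intro integral_mono_AE) (auto simp: distrib_right elim!: AE_mp)
  also have "\<dots> = ln 2 * (LINT y|lborel. \<bar>f y\<bar>)" by simp
  finally show ?thesis .
qed

lemma Ck_imp_continuous_on: "Ck k f \<Longrightarrow> continuous_on UNIV f"
  by (cases k) (auto intro: differentiable_imp_continuous_on)

theorem lemma3p1:
  fixes p :: real and u :: "real^4 \<Rightarrow> real"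
  assumes "p > 0"
    and "Ck 4 u"
    and "\<forall>x. bilaplacian u x = (1 - norm x powr p) * exp (4 * u x)"
    and "integrable lborel (\<lambda>x. (1 - norm x powr p) * exp (4 * u x))"
  shows "\<exists>C. \<forall>x::real^4. norm x \<ge> 4 \<longrightarrow>
           (1 / (8 * pi\<^sup>2)) * (LINT y|lborel. ln (norm y / norm (x - y)) * ((1 - norm y powr p) * exp (4 * u y)))
           \<le> - (LINT y|lborel. (1 - norm y powr p) * exp (4 * u y)) / (8 * pi\<^sup>2) * ln (norm x) + C"
proof -
  define f where "f y = (1 - norm y powr p) * exp (4 * u y)" for y :: "real^4"
  have "continuous_on UNIV f"
    unfolding f_def using Ck_imp_continuous_on[OF assms(2)] \<open>p > 0\<close>
    by (intro continuous_intros continuous_on_powr') auto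
  moreover have "0 \<le> f y" if "norm y < 1" for y
    using powr_le1[of p "norm y"] that \<open>p > 0\<close> by (simp add: f_def)
  moreover have "f y \<le> 0" if "1 \<le> norm y" for y
    using ge_one_powr_ge_zero[OF that, of p] \<open>p > 0\<close> by (simp add: f_def mult_nonpos_nonneg)
  ultimately have "(LINT y|lborel. ln (norm y / norm (x - y)) * f y) + ln (norm x) * (LINT y|lborel. f y)
      \<le> ln 2 * (LINT y|lborel. \<bar>f y\<bar>)" if "4 \<le> norm x" for x
    using assms(4) that by (intro ln_kernel_integral_le) (auto simp: f_def[abs_def])
  then have "(1 / (8 * pi\<^sup>2)) * (LINT y|lborel. ln (norm y / norm (x - y)) * f y)
      \<le> - (LINT y|lborel. f y) / (8 * pi\<^sup>2) * ln (norm x) + ln 2 * (LINT y|lborel. \<bar>f y\<bar>) / (8 * pi\<^sup>2)"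
    if "4 \<le> norm x" for x
    using that by (simp add: field_simps)
  then show ?thesis unfolding f_def by blast
qed

end
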